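(* For all integers $n,k\ge1$, $$\frac{L_1(k)}{n^k}<\sum_{t=k}^\infty\frac{g_{e,1}(t)}{n^t}<\frac{U_1(k)}{n^k},$$ where $L_1(k)=\left(\cosh\alpha-\frac{6\alpha\sinh\alpha}{5\sqrt{k+1}}-\frac{3}{10(k+1)^{3/2}}\right)24^{-k}$ and $U_1(k)=\left(\frac{24\cosh\alpha}{23}-\frac{\alpha\sinh\alpha}{2\sqrt{k+1}}+\frac{5}{4(k+1)^{3/2}}\right)24^{-k}$.
   Context: $\alpha=\pi/6$. $(a)_m=a(a+1)\cdots(a+m-1)$ is the rising factorial ($(a)_0=1$). For $t\ge0$, $$S_1(t)=\sum_{s=1}^t\frac{(-1)^s(1/2-s)_{s+1}}{s}\sum_{u=1}^s\frac{(-1)^u(-s)_u}{(s+u)!\,(2u-1)!}\left(\frac{\pi^2}{36}\right)^u,\qquad g_{e,1}(t)=\frac{1+S_1(t)}{24^t}.$$ *)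

theory Defs
  imports "HOL-Analysis.Analysis"
begin

definition alpha :: real where "alpha = pi / 6"

definition S1 :: "nat \<Rightarrow> real" where
  "S1 t = (\<Sum>s=1..t. ((-1)^s * pochhammer (1/2 - real s) (s+1) / real s) *
      (\<Sum>u=1..s. (-1)^u * pochhammer (- real s) u / (fact (s+u) * fact (2*u-1))
                   * (pi^2/36)^u))"

definition ge1 :: "nat \<Rightarrow> real" where
  "ge1 t = (1 + S1 t) / 24^t"

definition L1 :: "nat \<Rightarrow> real" where
  "L1 k = (cosh alpha - 6 * alpha * sinh alpha / (5 * sqrt (real k + 1))
           - 3 / (10 * (real k + 1) powr (3/2))) / 24^k"

definition U1 :: "nat \<Rightarrow> real" where
  "U1 k = (24 * cosh alpha / 23 - alpha * sinh alpha / (2 * sqrt (real k + 1))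
           + 5 / (4 * (real k + 1) powr (3/2))) / 24^k"

end

theory Submission
  imports Defs
begin

text \<open>Written with factorials, the \<open>(s, u)\<close> summand of \<open>S1 t\<close> is
  \<open>\<alpha>\<^sup>2\<^sup>u/(2u)!\<close> times the amount by which the probability that \<open>2s\<close> fair coin tosses show
  between \<open>s - u + 1\<close> and \<open>s + u\<close> heads falls when \<open>s - 1\<close> is replaced by \<open>s\<close>. Summing over
  \<open>s\<close> telescopes, so \<open>1 + S1 t = cosh \<alpha> - D t\<close> with \<open>D t = \<Sum>\<^sub>u \<alpha>\<^sup>2\<^sup>u/(2u)! P\<^sub>t(u)\<close>,
  \<open>P\<^sub>t(u)\<close> the window probability for \<open>2t\<close> tosses. Comparing the window with the central
  binomial coefficient, \<open>2u b\<^sub>t (1 - u\<^sup>2/t) \<le> P\<^sub>t(u) \<le> 2u b\<^sub>t\<close> where \<open>b\<^sub>t = C(2t,t)/4\<^sup>t\<close>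
  satisfies \<open>1/\<surd>(4t+1) \<le> b\<^sub>t \<le> 1/\<surd>(2t+1)\<close>; hence \<open>D t = b\<^sub>t \<alpha> sinh \<alpha> + O(b\<^sub>t/t)\<close>.
  In the tail sum the first term gives the lower bound, and bounding the later terms by
  \<open>cosh \<alpha> / 24\<^sup>t\<close> gives the factor \<open>24/23\<close> of the upper bound.\<close>

section \<open>The defect of \<open>S1\<close> as a series of window probabilities\<close>

definition cosh_coeff :: "real \<Rightarrow> nat \<Rightarrow> real" where
  "cosh_coeff x u = x ^ (2*u) / fact (2*u)"

text \<open>The probability that \<open>2t\<close> fair coin tosses show between \<open>t - u + 1\<close> and \<open>t + u\<close>
  heads (truncated subtraction cuts the window off at \<open>0\<close>).\<close>

definition window_prob :: "nat \<Rightarrow> nat \<Rightarrow> real" where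
  "window_prob t u = (\<Sum>i=t+1-u..t+u. real (2*t choose i)) / 4^t"

text \<open>For \<open>1 \<le> u\<close> this is \<open>window_prob (s - 1) u - window_prob s u\<close>, see \<open>window_prob_diff\<close>.\<close>

definition window_drop :: "nat \<Rightarrow> nat \<Rightarrow> real" where
  "window_drop s u = (if u \<le> s then real u / real s * real (2 * s choose (s-u)) / 4^s else 0)"

lemma pochhammer_half_minus:
  "(-1::real)^s * pochhammer (1/2 - real s) (s+1) = fact (2 * s) / (2 * 4^s * fact s)"
proof -
  have "pochhammer (1/2 - real s) (s+1) = pochhammer (- (real s - 1/2)) (s+1)"
    by (simp add: algebra_simps)
  also have "\<dots> = (-1)^(s+1) * pochhammer (-1/2) (Suc s)"
    by (subst pochhammer_minus) (simp add: algebra_simps)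
  also have "pochhammer (-1/2::real) (Suc s) = (-1/2) * pochhammer (1/2) s"
    by (subst pochhammer_rec) simp
  finally have "pochhammer (1/2 - real s) (s+1) = (-1)^s * pochhammer (1/2) s / 2"
    by (simp add: power_add)
  moreover have "(-1::real)^s * (-1)^s = 1"
    by (simp flip: power_mult_distrib)
  ultimately have "(-1::real)^s * pochhammer (1/2 - real s) (s+1) = pochhammer (1/2) s / 2"
    by (metis mult.assoc mult_1 times_divide_eq_right)
  moreover have "pochhammer (2 * (1/2::real)) (2 * s)
      = of_nat (2^(2 * s)) * pochhammer (1/2) s * pochhammer (1/2 + 1/2) s"
    by (rule pochhammer_double)
  then have "fact (2 * s) = (4::real)^s * pochhammer (1/2) s * fact s"
    by (simp add: pochhammer_fact power_mult)
  then have "pochhammer (1/2::real) s = fact (2 * s) / (4^s * fact s)"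
    by (simp add: field_simps)
  ultimately show ?thesis by simp
qed

lemma pochhammer_minus_of_nat:
  assumes "u \<le> s"
  shows "(-1::real)^u * pochhammer (- real s) u = fact s / fact (s-u)"
proof -
  have "(-1::real)^u * pochhammer (- real s) u = pochhammer (real s - real u + 1) u"
    by (simp add: pochhammer_minus flip: power_mult_distrib)
  moreover have "pochhammer (1::real) s = pochhammer 1 (s-u) * pochhammer (1 + of_nat (s-u)) (s - (s-u))"
    by (rule pochhammer_product) simp
  then have "fact s = fact (s-u) * pochhammer (real s - real u + 1) u"
    using assms by (simp add: pochhammer_fact of_nat_diff algebra_simps)
  ultimately show ?thesis by (simp add: field_simps)
qed

lemma S1_summand_eq:
  assumes "1 \<le> u" "u \<le> s"
  shows "((-1)^s * pochhammer (1/2 - real s) (s+1) / real s) *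
      ((-1)^u * pochhammer (- real s) u / (fact (s+u) * fact (2*u-1)) * (pi^2/36)^u)
      = cosh_coeff alpha u * window_drop s u"
proof -
  have pi: "(pi^2/36::real)^u = alpha^(2*u)"
    by (simp add: alpha_def power_mult power_divide)
  have binom: "real (2 * s choose (s-u)) = fact (2 * s) / (fact (s-u) * fact (s+u))"
    using assms(2) by (subst binomial_fact) (auto simp: algebra_simps)
  have fact: "(fact (2*u) :: real) = real (2*u) * fact (2*u-1)"
    using assms(1) by (subst fact_reduce) auto
  show ?thesis
    unfolding pochhammer_half_minus pochhammer_minus_of_nat[OF assms(2)] times_divide_eq_left mult.assoc
      cosh_coeff_def window_drop_def pi binom fact
    using assms by (simp add: field_simps)
qed

lemma binomial_window_identity_offset:
  fixes u p :: nat
  shows "real (u + p + 2) * (real (2*u+2*p+2 choose (p+2)) - real (2*u+2*p+2 choose p))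
     = real u * real (2*u+2*p+4 choose (p+2))"
proof -
  have key: "(y+x+2) * (C/((x+2)*(x+1)*A*B) - C/(A*((2*y+x+2)*(2*y+x+1)*B)))
     = y * ((2*y+2*x+4)*(2*y+2*x+3)*C/((x+2)*(x+1)*A*((2*y+x+2)*(2*y+x+1)*B)))"
    if "x \<ge> 0" "y \<ge> 0" "A > 0" "B > 0" for x y A B C :: real
  proof -
    define P Q where "P = (x+2)*(x+1)" and "Q = (2*y+x+2)*(2*y+x+1)"
    have "P > 0" "Q > 0" using that unfolding P_def Q_def by auto
    then have "C/(P*A*B) - C/(A*(Q*B)) = C * (Q - P) / (P*A*(Q*B))"
      using that by (simp add: field_simps)
    moreover have "(y+x+2) * (Q - P) = y * ((2*y+2*x+4)*(2*y+2*x+3))"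
      unfolding P_def Q_def by (simp add: algebra_simps)
    ultimately show ?thesis unfolding P_def[symmetric] Q_def[symmetric]
      by (simp add: mult.assoc mult.left_commute[of C])
  qed
  have c1: "real (2*u+2*p+2 choose (p+2)) = fact (2*u+2*p+2) / (fact (p+2) * fact (2*u+p))"
    by (subst binomial_fact) (auto simp: algebra_simps)
  have c2: "real (2*u+2*p+2 choose p) = fact (2*u+2*p+2) / (fact p * fact (2*u+p+2))"
    by (subst binomial_fact) (auto simp: algebra_simps)
  have c3: "real (2*u+2*p+4 choose (p+2)) = fact (2*u+2*p+4) / (fact (p+2) * fact (2*u+p+2))"
    by (subst binomial_fact) (auto simp: algebra_simps)
  have ff: "(fact (n+2)::real) = real (n+2) * real (n+1) * fact n" for n
    by (simp add: algebra_simps)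
  have f4: "(fact (2*u+2*p+4) :: real) = real (2*u+2*p+4) * real (2*u+2*p+3) * fact (2*u+2*p+2)"
    using ff[of "2*u+2*p+2"] by (simp add: numeral_eq_Suc)
  show ?thesis
    unfolding c1 c2 c3 f4 ff[of p] ff[of "2*u+p"] add.assoc[of "2*u+p", symmetric]
    using key[of "real p" "real u" "fact p" "fact (2*u+p)" "fact (2*u+2*p+2)"]
    by (simp add: ac_simps)
qed

lemma binomial_window_identity:
  assumes "1 \<le> u" "u \<le> t"
  shows "real (t+1) * (real (2 * t choose (t-u+1)) - real (2 * t choose (t+u+1)))
     = real u * real (2 * t + 2 choose (t+1-u))"
proof (cases "u = t")
  case True
  then show ?thesis by (simp add: algebra_simps binomial_eq_0)
next
  case False
  define p where "p = t - u - 1"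
  have t: "t = u + p + 1" using False assms unfolding p_def by simp
  have "2 * t choose (t+u+1) = 2*u+2*p+2 choose (2*u+2*p+2 - p)"
    by (rule arg_cong2[where f = binomial]) (simp_all add: t)
  also have "\<dots> = 2*u+2*p+2 choose p" by (rule binomial_symmetric[symmetric]) simp
  moreover have "2 * t choose (t-u+1) = 2*u+2*p+2 choose (p+2)"
    by (rule arg_cong2[where f = binomial]) (simp_all add: t)
  moreover have "2 * t + 2 choose (t+1-u) = 2*u+2*p+4 choose (p+2)"
    by (rule arg_cong2[where f = binomial]) (simp_all add: t)
  ultimately show ?thesis using binomial_window_identity_offset[of u p] by (simp add: t)
qed

lemma sum_second_differences:
  fixes f :: "nat \<Rightarrow> 'a::comm_ring_1"
  shows "(\<Sum>j<n. f j - 2 * f (Suc j) + f (Suc (Suc j))) = (f (Suc n) - f n) - (f 1 - f 0)"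
  by (induction n) (simp_all add: algebra_simps)

lemma sum_Suc_atLeastAtMost_shift:
  "(\<Sum>i=Suc a..a+m. g i) = (\<Sum>j<m. g (a + Suc j))"
  by (induction m) (simp_all add: atLeastAtMostSuc_conv add.commute)

lemma binomial_Suc_Suc_twice:
  "real (Suc (Suc n) choose Suc (Suc k))
     = real (n choose k) + 2 * real (n choose Suc k) + real (n choose Suc (Suc k))"
  by simp

lemma window_sum_diff:
  assumes "1 \<le> u" "u \<le> t"
  shows "4 * (\<Sum>i=t+1-u..t+u. real (2 * t choose i))
           - (\<Sum>i=Suc t+1-u..Suc t+u. real (2 * Suc t choose i))
         = real (2 * t choose (t-u+1)) - real (2 * t choose (t+u+1))"
proof -
  define a where "a = t - u"
  define f where "f j = real (2 * t choose (a+j))" for j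
  have "(\<Sum>i=t+1-u..t+u. real (2 * t choose i)) = (\<Sum>i=Suc a..a+2*u. real (2 * t choose i))"
    using assms unfolding a_def by (intro sum.cong) auto
  also have "\<dots> = (\<Sum>j<2*u. f (Suc j))"
    unfolding sum_Suc_atLeastAtMost_shift f_def ..
  finally have window: "(\<Sum>i=t+1-u..t+u. real (2 * t choose i)) = (\<Sum>j<2*u. f (Suc j))" .
  have "(\<Sum>i=Suc t+1-u..Suc t+u. real (2 * Suc t choose i))
      = (\<Sum>i=Suc (Suc a)..Suc a+2*u. real (2 * Suc t choose i))"
    using assms unfolding a_def by (intro sum.cong) auto
  also have "\<dots> = (\<Sum>j<2*u. f j + 2 * f (Suc j) + f (Suc (Suc j)))"
    unfolding sum_Suc_atLeastAtMost_shift f_def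
    by (simp only: mult_2 add_Suc_right add_Suc binomial_Suc_Suc_twice)
  finally have window_Suc: "(\<Sum>i=Suc t+1-u..Suc t+u. real (2 * Suc t choose i))
      = (\<Sum>j<2*u. f j + 2 * f (Suc j) + f (Suc (Suc j)))" .
  have "f (2*u) = f 0"
    using assms binomial_symmetric[of "t-u" "2*t"] unfolding f_def a_def by (simp add: algebra_simps)
  moreover have "f (Suc (2*u)) = real (2 * t choose (t+u+1))" "f 1 = real (2 * t choose (t-u+1))"
    using assms unfolding f_def a_def by (simp_all add: algebra_simps)
  moreover have "(\<Sum>j<2*u. f j + 2 * f (Suc j) + f (Suc (Suc j)))
      = (\<Sum>j<2*u. f j) + 2 * (\<Sum>j<2*u. f (Suc j)) + (\<Sum>j<2*u. f (Suc (Suc j)))"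
    "(\<Sum>j<2*u. f j - 2 * f (Suc j) + f (Suc (Suc j)))
      = (\<Sum>j<2*u. f j) - 2 * (\<Sum>j<2*u. f (Suc j)) + (\<Sum>j<2*u. f (Suc (Suc j)))"
    by (simp_all add: sum.distrib sum_subtractf sum_distrib_left)
  ultimately show ?thesis
    unfolding window window_Suc using sum_second_differences[of f "2*u"] by simp
qed

lemma window_prob_step:
  assumes "1 \<le> u" "u \<le> t"
  shows "window_prob t u - window_prob (Suc t) u = window_drop (Suc t) u"
proof -
  have "window_prob t u - window_prob (Suc t) u
      = (real (2 * t choose (t-u+1)) - real (2 * t choose (t+u+1))) / 4^Suc t"
    unfolding window_prob_def window_sum_diff[OF assms, symmetric] by (simp add: field_simps)
  also have "real (2 * t choose (t-u+1)) - real (2 * t choose (t+u+1))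
      = real u * real (2 * t + 2 choose (t+1-u)) / real (t+1)"
    using binomial_window_identity[OF assms] by (simp add: field_simps)
  finally show ?thesis unfolding window_drop_def using assms by simp
qed

lemma sum_choose_atLeast0_atMost:
  "n \<le> m \<Longrightarrow> (\<Sum>i=0..m. real (n choose i)) = 2^n"
proof (induction m rule: dec_induct)
  case base
  show ?case using choose_row_sum[of n] by (simp add: atLeast0AtMost flip: of_nat_sum)
next
  case (step m)
  then show ?case by (simp add: binomial_eq_0)
qed

lemma window_prob_eq_1: "t < u \<Longrightarrow> window_prob t u = 1"
  unfolding window_prob_def by (simp add: sum_choose_atLeast0_atMost power_mult)

lemma window_prob_Suc_diag: "window_prob (Suc t) (Suc t) = 1 - 1 / 4^Suc t"
proof -
  define m where "m = 2 * Suc t"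
  have "(\<Sum>i=0..m. real (m choose i)) = 1 + (\<Sum>i=1..m. real (m choose i))"
    by (simp add: sum.atLeast_Suc_atMost)
  moreover have "(\<Sum>i=0..m. real (m choose i)) = 4^Suc t"
    using sum_choose_atLeast0_atMost[of m m] unfolding m_def by (simp add: power_mult)
  ultimately have "(\<Sum>i=1..m. real (m choose i)) = 4^Suc t - 1" by linarith
  moreover have "{Suc t + 1 - Suc t..Suc t + Suc t} = {1..m}" unfolding m_def by auto
  ultimately show ?thesis unfolding window_prob_def m_def[symmetric] by (simp add: field_simps)
qed

lemma window_prob_diff:
  assumes "1 \<le> u"
  shows "window_prob t u - window_prob (Suc t) u = window_drop (Suc t) u"
proof -
  consider "u \<le> t" | "u = Suc t" | "Suc t < u" by linarith
  then show ?thesis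
  proof cases
    case 1
    then show ?thesis using window_prob_step assms by blast
  next
    case 2
    then show ?thesis using window_prob_eq_1[of t u] window_prob_Suc_diag[of t]
      by (simp add: window_drop_def)
  next
    case 3
    then show ?thesis using window_prob_eq_1[of t u] window_prob_eq_1[of "Suc t" u]
      by (simp add: window_drop_def)
  qed
qed

lemma one_minus_window_prob:
  assumes "1 \<le> u"
  shows "1 - window_prob t u = (\<Sum>s=1..t. window_drop s u)"
proof (induction t)
  case 0
  then show ?case using window_prob_eq_1[of 0 u] assms by simp
next
  case (Suc t)
  then show ?case using window_prob_diff[OF assms, of t] by simp
qed

lemma S1_eq_window_sum: "S1 t = (\<Sum>u=1..t. cosh_coeff alpha u * (1 - window_prob t u))"
proof -
  have "S1 t = (\<Sum>s=1..t. \<Sum>u=1..s. cosh_coeff alpha u * window_drop s u)"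
    unfolding S1_def sum_distrib_left by (intro sum.cong refl S1_summand_eq) auto
  also have "\<dots> = (\<Sum>s=1..t. \<Sum>u=1..t. cosh_coeff alpha u * window_drop s u)"
    by (intro sum.cong refl sum.mono_neutral_left) (auto simp: window_drop_def)
  also have "\<dots> = (\<Sum>u=1..t. cosh_coeff alpha u * (1 - window_prob t u))"
    by (subst sum.swap) (simp add: one_minus_window_prob sum_distrib_left)
  finally show ?thesis .
qed

lemma sums_cosh_coeff: "cosh_coeff x sums cosh x"
proof -
  have "(\<lambda>n. (\<lambda>n. if even n then x ^ n /\<^sub>R fact n else 0) (2*n)) sums cosh x"
    by (subst sums_mono_reindex) (auto simp: strict_mono_def cosh_converges elim!: evenE)
  moreover have "cosh_coeff x = (\<lambda>n. (\<lambda>n. if even n then x ^ n /\<^sub>R fact n else 0) (2*n))"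
    by (auto simp: cosh_coeff_def fun_eq_iff divide_inverse mult.commute)
  ultimately show ?thesis by simp
qed

lemma sums_of_nat_mult_cosh_coeff: "(\<lambda>u. real (2*u) * cosh_coeff x u) sums (x * sinh x)"
proof -
  have "(\<lambda>n. (\<lambda>n. if even n then 0 else x ^ n /\<^sub>R fact n) (2*n+1)) sums sinh x"
    by (subst sums_mono_reindex) (auto simp: strict_mono_def sinh_converges elim!: oddE)
  then have "(\<lambda>n. x * (x^(2*n+1) / fact (2*n+1))) sums (x * sinh x)"
    by (intro sums_mult) (simp add: divide_inverse mult.commute)
  moreover have "real (2 * Suc n) * cosh_coeff x (Suc n) = x * (x^(2*n+1) / fact (2*n+1))" for n
    unfolding cosh_coeff_def by (simp add: field_simps del: of_nat_Suc)
  ultimately have "(\<lambda>n. real (2 * Suc n) * cosh_coeff x (Suc n)) sums (x * sinh x)" by simp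
  then show ?thesis by (subst (asm) sums_Suc_iff) simp
qed

definition S1_defect :: "nat \<Rightarrow> real" where
  "S1_defect t = cosh alpha - (1 + S1 t)"

lemma ge1_eq_S1_defect: "ge1 t = (cosh alpha - S1_defect t) / 24^t"
  unfolding ge1_def S1_defect_def by simp

lemma sums_S1_defect: "(\<lambda>u. cosh_coeff alpha u * window_prob t u) sums S1_defect t"
proof -
  have "(\<lambda>u. cosh_coeff alpha u * (1 - window_prob t u))
      sums (\<Sum>u\<in>{0..t}. cosh_coeff alpha u * (1 - window_prob t u))"
    by (rule sums_finite) (auto simp: window_prob_eq_1)
  moreover have "(\<Sum>u\<in>{0..t}. cosh_coeff alpha u * (1 - window_prob t u)) = 1 + S1 t"
    by (simp add: S1_eq_window_sum sum.atLeast_Suc_atMost cosh_coeff_def window_prob_def)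
  ultimately have "(\<lambda>u. cosh_coeff alpha u * (1 - window_prob t u)) sums (1 + S1 t)" by simp
  from sums_diff[OF sums_cosh_coeff[of alpha] this] show ?thesis
    unfolding S1_defect_def by (simp add: algebra_simps)
qed

section \<open>The central binomial probability\<close>

definition central_binom_prob :: "nat \<Rightarrow> real" where
  "central_binom_prob t = real (2 * t choose t) / 4^t"

lemma central_binom_prob_pos: "central_binom_prob t > 0"
  unfolding central_binom_prob_def by simp

lemma central_binom_prob_Suc:
  "central_binom_prob (Suc t) = central_binom_prob t * ((2 * real t + 1) / (2 * real t + 2))"
proof -
  have c1: "real (2 * Suc t choose Suc t) = fact (2 * t + 2) / (fact (t + 1) * fact (t + 1))"
    by (subst binomial_fact) (auto simp: algebra_simps)
  have c2: "real (2 * t choose t) = fact (2 * t) / (fact t * fact t)"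
    by (subst binomial_fact) (auto simp: algebra_simps)
  have f1: "(fact (2 * t + 2) :: real) = (2 * (real t + 1)) * (2 * real t + 1) * fact (2 * t)"
    by (simp add: algebra_simps)
  have f2: "(fact (t + 1) :: real) = (real t + 1) * fact t"
    by (simp add: algebra_simps)
  have "(2*b)*c*F / (b*G*(b*G)) / (4*P) = F / (G*G) / P * (c / (2*b))"
    if "b > 0" "G > 0" "P > 0" for b c F G P :: real
    using that by (simp add: field_simps)
  from this[of "real t + 1" "fact t" "4^t" "2 * real t + 1" "fact (2 * t)"]
  show ?thesis
    unfolding central_binom_prob_def c1 c2 f1 f2 by (simp add: mult_2_right add.assoc)
qed

lemma central_binom_prob_sq_le: "central_binom_prob t ^ 2 * (2 * real t + 1) \<le> 1"
proof (induction t)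
  case 0
  then show ?case by (simp add: central_binom_prob_def)
next
  case (Suc t)
  define q where "q = (2 * real t + 1) / (2 * real t + 2)"
  have "(2 * real t + 1)^2 * (2 * real t + 3) \<le> (2 * real t + 1) * (2 * real t + 2)^2"
    by (simp add: power2_eq_square algebra_simps)
  then have "q^2 * (2 * real t + 3) \<le> 2 * real t + 1"
    unfolding q_def power_divide by (simp add: divide_le_eq add_pos_nonneg)
  then have "central_binom_prob t ^ 2 * (q^2 * (2 * real t + 3))
      \<le> central_binom_prob t ^ 2 * (2 * real t + 1)"
    by (rule mult_left_mono) simp
  moreover have "central_binom_prob (Suc t) ^ 2 * (2 * real (Suc t) + 1)
      = central_binom_prob t ^ 2 * (q^2 * (2 * real t + 3))"
    unfolding central_binom_prob_Suc q_def[symmetric] by (simp add: power_mult_distrib)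
  ultimately show ?case using Suc by linarith
qed

lemma central_binom_prob_sq_ge: "1 \<le> central_binom_prob t ^ 2 * (4 * real t + 1)"
proof (induction t)
  case 0
  then show ?case by (simp add: central_binom_prob_def)
next
  case (Suc t)
  define q where "q = (2 * real t + 1) / (2 * real t + 2)"
  have "(4 * real t + 1) * (2 * real t + 2)^2 \<le> (2 * real t + 1)^2 * (4 * real t + 5)"
    by (simp add: power2_eq_square algebra_simps)
  then have "4 * real t + 1 \<le> q^2 * (4 * real t + 5)"
    unfolding q_def power_divide by (simp add: le_divide_eq add_pos_nonneg)
  then have "central_binom_prob t ^ 2 * (4 * real t + 1)
      \<le> central_binom_prob t ^ 2 * (q^2 * (4 * real t + 5))"
    by (rule mult_left_mono) simp
  moreover have "central_binom_prob (Suc t) ^ 2 * (4 * real (Suc t) + 1)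
      = central_binom_prob t ^ 2 * (q^2 * (4 * real t + 5))"
    unfolding central_binom_prob_Suc q_def[symmetric] by (simp add: power_mult_distrib)
  ultimately show ?case using Suc by linarith
qed

lemma central_binom_prob_mult_sqrt_le: "central_binom_prob t * sqrt (2 * real t + 1) \<le> 1"
proof (rule power2_le_imp_le)
  show "(central_binom_prob t * sqrt (2 * real t + 1))^2 \<le> 1^2"
    using central_binom_prob_sq_le[of t] by (simp only: power_mult_distrib real_sqrt_pow2) simp
qed simp

lemma central_binom_prob_mult_sqrt_ge: "1 \<le> central_binom_prob t * sqrt (4 * real t + 1)"
proof (rule power2_le_imp_le)
  show "1^2 \<le> (central_binom_prob t * sqrt (4 * real t + 1))^2"
    using central_binom_prob_sq_ge[of t] by (simp only: power_mult_distrib real_sqrt_pow2) simp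
  show "0 \<le> central_binom_prob t * sqrt (4 * real t + 1)"
    using central_binom_prob_pos[of t] by simp
qed

lemma central_binom_prob_mult_sqrt_Suc_le: "central_binom_prob t * sqrt (real t + 1) \<le> 1"
proof -
  have "central_binom_prob t * sqrt (real t + 1) \<le> central_binom_prob t * sqrt (2 * real t + 1)"
    using central_binom_prob_pos[of t] by (intro mult_left_mono) auto
  then show ?thesis using central_binom_prob_mult_sqrt_le[of t] by linarith
qed

section \<open>Bounds on the window probabilities and on the defect\<close>

lemma window_prob_le: "window_prob t u \<le> 2 * real u * central_binom_prob t"
proof (cases "u \<le> t")
  case True
  have "(\<Sum>i=t+1-u..t+u. real (2 * t choose i)) \<le> real (card {t+1-u..t+u}) * real (2 * t choose t)"
    by (rule sum_bounded_above) (simp add: binomial_maximum')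
  also have "card {t+1-u..t+u} = 2 * u" using True by simp
  finally show ?thesis
    unfolding window_prob_def central_binom_prob_def by (simp add: divide_right_mono)
next
  case False
  have "(2 * real t + 2)^2 \<le> (2 * real u)^2"
    using False by (intro power_mono) auto
  moreover have "4 * real t + 1 \<le> (2 * real t + 2)^2"
    by (simp add: power2_eq_square algebra_simps)
  ultimately have "sqrt (4 * real t + 1) \<le> 2 * real u"
    by (intro real_le_lsqrt) auto
  then have "sqrt (4 * real t + 1) * central_binom_prob t \<le> 2 * real u * central_binom_prob t"
    using central_binom_prob_pos[of t] by (intro mult_right_mono) auto
  then show ?thesis
    using central_binom_prob_mult_sqrt_ge[of t] False window_prob_eq_1[of t u]
    by (simp add: mult.commute)
qed

lemma binomial_Suc_shift:
  assumes "u < t"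
  shows "real (2 * t choose (t+u+1)) = real (2 * t choose (t+u)) * ((real t - real u) / (real t + real u + 1))"
proof -
  have "Suc (t+u) * (2 * t choose Suc (t+u)) = (2 * t - (t+u)) * (2 * t choose (t+u))"
    using binomial_absorption[of "t+u" "2 * t"] binomial_absorb_comp[of "2 * t" "t+u"] by simp
  then have "real (Suc (t+u)) * real (2 * t choose (t+u+1)) = real (t-u) * real (2 * t choose (t+u))"
    by (metis Suc_eq_plus1 diff_add_inverse of_nat_mult diff_diff_left mult_2)
  then have "(real t + real u + 1) * real (2 * t choose (t+u+1)) = (real t - real u) * real (2 * t choose (t+u))"
    using assms by (simp add: of_nat_diff algebra_simps)
  then show ?thesis by (simp add: field_simps add_pos_nonneg)
qed

lemma binomial_shift_ge:
  assumes "1 \<le> t"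
  shows "u \<le> t \<Longrightarrow> real (2 * t choose t) * (1 - real u^2 / real t) \<le> real (2 * t choose (t+u))"
proof (induction u)
  case 0
  then show ?case by simp
next
  case (Suc u)
  define r where "r = 1 - real u^2 / real t"
  define q where "q = (real t - real u) / (real t + real u + 1)"
  have ut: "u < t" using Suc by simp
  show ?case
  proof (cases "1 - real (Suc u)^2 / real t \<le> 0")
    case True
    then have "real (2 * t choose t) * (1 - real (Suc u)^2 / real t) \<le> 0"
      by (intro mult_nonneg_nonpos) auto
    then show ?thesis by (meson of_nat_0_le_iff order_trans)
  next
    case False
    have "real u^2 / real t \<le> real (Suc u)^2 / real t"
      by (intro divide_right_mono power_mono) auto
    then have r: "0 \<le> r" "r \<le> 1" using False unfolding r_def by auto
    have q: "0 \<le> q" "1 - (2 * real u + 1) / real t \<le> q"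
      using ut assms unfolding q_def by (auto simp: field_simps)
    have "1 - real (Suc u)^2 / real t = r - (2 * real u + 1) / real t"
      unfolding r_def using assms by (simp add: field_simps power2_eq_square)
    also have "\<dots> \<le> r * (1 - (2 * real u + 1) / real t)"
      using mult_left_le_one_le[of "(2 * real u + 1) / real t" r] r
      by (simp add: right_diff_distrib)
    also have "\<dots> \<le> r * q" using q r by (intro mult_left_mono) auto
    finally have "real (2 * t choose t) * (1 - real (Suc u)^2 / real t) \<le> real (2 * t choose t) * r * q"
      by (simp add: mult.assoc mult_left_mono)
    also have "\<dots> \<le> real (2 * t choose (t+u)) * q"
      using Suc ut q unfolding r_def by (intro mult_right_mono) auto
    also have "\<dots> = real (2 * t choose (t + Suc u))"
      using binomial_Suc_shift[OF ut] unfolding q_def by simp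
    finally show ?thesis .
  qed
qed

lemma binomial_window_ge:
  assumes "u \<le> t" "i \<in> {t+1-u..t+u}"
  shows "2 * t choose (t+u) \<le> 2 * t choose i"
proof (cases "t \<le> i")
  case True
  then show ?thesis using assms by (intro binomial_antimono) auto
next
  case False
  then have "2 * t choose (t+u) \<le> 2 * t choose (2 * t - i)"
    using assms by (intro binomial_antimono) auto
  with False show ?thesis by (simp add: binomial_symmetric[of i "2 * t"])
qed

lemma window_prob_ge:
  assumes "1 \<le> t"
  shows "2 * real u * central_binom_prob t * (1 - real u^2 / real t) \<le> window_prob t u"
proof (cases "u \<le> t")
  case True
  have "2 * real u * (real (2 * t choose t) * (1 - real u^2 / real t))
      \<le> 2 * real u * real (2 * t choose (t+u))"
    using binomial_shift_ge[OF assms True] by (intro mult_left_mono) auto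
  also have "\<dots> = real (card {t+1-u..t+u}) * real (2 * t choose (t+u))" using True by simp
  also have "\<dots> \<le> (\<Sum>i=t+1-u..t+u. real (2 * t choose i))"
    by (rule sum_bounded_below) (use binomial_window_ge[OF True] in simp)
  finally have "2 * real u * (real (2 * t choose t) * (1 - real u^2 / real t)) / 4^t \<le> window_prob t u"
    unfolding window_prob_def by (rule divide_right_mono) simp
  then show ?thesis unfolding central_binom_prob_def by simp
next
  case False
  then have "real u \<le> real u^2 / real t"
    using assms by (simp add: le_divide_eq power2_eq_square mult_left_mono)
  then have "2 * real u * central_binom_prob t * (1 - real u^2 / real t) \<le> 0"
    using False central_binom_prob_pos[of t] by (intro mult_nonneg_nonpos) auto
  then show ?thesis using False window_prob_eq_1[of t u] by simp
qed

lemma cosh_coeff_nonneg: "0 \<le> cosh_coeff x u"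
  unfolding cosh_coeff_def by (simp add: power_mult)

lemma window_prob_nonneg: "0 \<le> window_prob t u"
  unfolding window_prob_def by (simp add: sum_nonneg)

lemma S1_defect_nonneg: "0 \<le> S1_defect t"
  using sums_le[OF _ sums_zero sums_S1_defect] cosh_coeff_nonneg window_prob_nonneg by simp

lemma S1_defect_le: "S1_defect t \<le> central_binom_prob t * (alpha * sinh alpha)"
proof (rule sums_le[OF _ sums_S1_defect sums_mult[OF sums_of_nat_mult_cosh_coeff]])
  fix u
  have "cosh_coeff alpha u * window_prob t u \<le> cosh_coeff alpha u * (2 * real u * central_binom_prob t)"
    by (intro mult_left_mono window_prob_le cosh_coeff_nonneg)
  then show "cosh_coeff alpha u * window_prob t u
      \<le> central_binom_prob t * (real (2 * u) * cosh_coeff alpha u)"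
    by (simp add: algebra_simps)
qed

lemma cube_le_fact_double: "1 \<le> n \<Longrightarrow> 2 * real n ^ 3 \<le> fact (2 * n)"
proof (induction n rule: dec_induct)
  case base
  then show ?case by simp
next
  case (step n)
  have n: "1 \<le> real n" using step by simp
  have "(real n + 1)^2 \<le> (2 * real n)^2" using n by (intro power_mono) auto
  also have "\<dots> = 4 * real n ^ 2 * 1" by (simp add: power2_eq_square)
  also have "\<dots> \<le> 4 * real n ^ 2 * real n" using n by (intro mult_left_mono) auto
  also have "\<dots> \<le> (2 * real n + 1) * (2 * real n ^ 3)" using n by (simp add: power3_eq_cube power2_eq_square)
  finally have sq: "(real n + 1)^2 \<le> (2 * real n + 1) * (2 * real n ^ 3)" .
  have "2 * real (Suc n) ^ 3 = 2 * (real n + 1) * (real n + 1)^2"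
    by (simp add: power2_eq_square power3_eq_cube algebra_simps)
  also have "\<dots> \<le> (2 * real n + 2) * (2 * real n + 1) * (2 * real n ^ 3)"
    using mult_left_mono[OF sq, of "2 * (real n + 1)"] by (simp add: algebra_simps)
  also have "\<dots> \<le> (2 * real n + 2) * (2 * real n + 1) * fact (2 * n)"
    using step by (intro mult_left_mono) auto
  also have "\<dots> = fact (2 * Suc n)" by (simp add: algebra_simps)
  finally show ?case .
qed

lemma alpha_pos: "0 < alpha"
  unfolding alpha_def by simp

lemma alpha_lt_1: "alpha < 1"
  unfolding alpha_def using pi_less_4 by simp

lemma alpha_sq_lt_third: "alpha^2 < 1/3"
proof -
  have "pi^2 < (17/5::real)^2"
    using pi_approx(2) by (intro power_strict_mono) auto
  then show ?thesis unfolding alpha_def by (simp add: power_divide)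
qed

lemma alpha_mult_sinh_lt_cosh: "alpha * sinh alpha < cosh alpha"
proof -
  have "alpha * sinh alpha \<le> sinh alpha"
    using alpha_pos alpha_lt_1 by (simp add: mult_left_le_one_le)
  also have "sinh alpha < cosh alpha"
    using cosh_minus_sinh[of alpha] by (metis diff_gt_0_iff_gt exp_gt_zero)
  finally show ?thesis .
qed

lemma S1_defect_ge:
  assumes "1 \<le> t"
  shows "central_binom_prob t * (alpha * sinh alpha)
           - central_binom_prob t / real t * (alpha^2 / (1 - alpha^2)) \<le> S1_defect t"
proof -
  define x where "x = alpha^2"
  define c where "c = central_binom_prob t"
  have x: "0 < x" "x < 1"
    unfolding x_def using alpha_pos alpha_lt_1 by (simp_all add: power_less_one_iff)
  have c: "0 \<le> c / real t" unfolding c_def using central_binom_prob_pos[of t] by simp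
  have defect: "(\<lambda>u. cosh_coeff alpha (Suc u) * window_prob t (Suc u)) sums S1_defect t"
    using sums_S1_defect[of t] by (subst sums_Suc_iff) (simp add: window_prob_def)
  have sinh: "(\<lambda>u. real (2 * Suc u) * cosh_coeff alpha (Suc u)) sums (alpha * sinh alpha)"
    using sums_of_nat_mult_cosh_coeff by (subst sums_Suc_iff) simp
  have geom: "(\<lambda>u. x * x^u) sums (x * (1 / (1 - x)))"
    using x by (intro sums_mult geometric_sums) simp
  have bound: "(\<lambda>u. c * (real (2 * Suc u) * cosh_coeff alpha (Suc u)) - c / real t * (x * x^u))
      sums (c * (alpha * sinh alpha) - c / real t * (x * (1 / (1 - x))))"
    using sums_diff[OF sums_mult[OF sinh, of c] sums_mult[OF geom, of "c / real t"]] .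
  have "c * (alpha * sinh alpha) - c / real t * (x * (1 / (1 - x))) \<le> S1_defect t"
  proof (rule sums_le[OF _ bound defect])
    fix u
    define n where "n = Suc u"
    have "2 * real n ^ 3 * cosh_coeff alpha n = x^n * (2 * real n ^ 3 / fact (2 * n))"
      unfolding cosh_coeff_def x_def by (simp add: power_mult)
    also have "\<dots> \<le> x^n"
      using cube_le_fact_double[of n] x unfolding n_def by (simp add: mult_left_le divide_le_eq)
    finally have cube: "2 * real n ^ 3 * cosh_coeff alpha n \<le> x^n" .
    have "c * (real (2 * n) * cosh_coeff alpha n) - c / real t * x^n
        \<le> c * (real (2 * n) * cosh_coeff alpha n) - c / real t * (2 * real n ^ 3 * cosh_coeff alpha n)"
      using mult_left_mono[OF cube c] by linarith
    also have "\<dots> = cosh_coeff alpha n * (2 * real n * c * (1 - real n^2 / real t))"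
      using assms by (simp add: field_simps power2_eq_square power3_eq_cube)
    also have "\<dots> \<le> cosh_coeff alpha n * window_prob t n"
      unfolding c_def by (intro mult_left_mono window_prob_ge assms cosh_coeff_nonneg)
    finally show "c * (real (2 * Suc u) * cosh_coeff alpha (Suc u)) - c / real t * (x * x^u)
        \<le> cosh_coeff alpha (Suc u) * window_prob t (Suc u)"
      unfolding n_def by simp
  qed
  then show ?thesis unfolding x_def c_def by simp
qed

section \<open>The tail sum\<close>

lemma ge1_pos: "0 < ge1 t"
proof -
  have "central_binom_prob t * 1 \<le> central_binom_prob t * sqrt (real t + 1)"
    using central_binom_prob_pos[of t] by (intro mult_left_mono) auto
  then have "central_binom_prob t * (alpha * sinh alpha) \<le> 1 * (alpha * sinh alpha)"
    using central_binom_prob_mult_sqrt_Suc_le[of t] alpha_pos by (intro mult_right_mono) auto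
  then show ?thesis
    unfolding ge1_eq_S1_defect using S1_defect_le[of t] alpha_mult_sinh_lt_cosh by simp
qed

lemma ge1_tail_term_le:
  assumes "1 \<le> n"
  shows "ge1 (t + k) / real n ^ (t + k) \<le> cosh alpha / 24^k / real n ^ k * (1/24)^t"
proof -
  have "ge1 (t + k) / real n ^ (t + k) \<le> ge1 (t + k) / real n ^ k"
    using ge1_pos[of "t + k"] assms by (intro divide_left_mono power_increasing) auto
  also have "\<dots> \<le> cosh alpha / 24^(t + k) / real n ^ k"
    unfolding ge1_eq_S1_defect using S1_defect_nonneg assms by (intro divide_right_mono) auto
  finally show ?thesis by (simp add: power_add power_one_over mult_ac)
qed

lemma summable_ge1_tail:
  assumes "1 \<le> n"
  shows "summable (\<lambda>t. ge1 (t + k) / real n ^ (t + k))"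
proof (rule summable_comparison_test')
  show "summable (\<lambda>t. cosh alpha / 24^k / real n ^ k * (1/24)^t)"
    by (intro summable_mult summable_geometric) simp
  show "norm (ge1 (t + k) / real n ^ (t + k)) \<le> cosh alpha / 24^k / real n ^ k * (1/24)^t" for t
    using ge1_tail_term_le[OF assms, of t k] ge1_pos[of "t + k"] by simp
qed

lemma ge1_tail_ge:
  assumes "1 \<le> n"
  shows "ge1 k / real n ^ k \<le> (\<Sum>t. ge1 (t + k) / real n ^ (t + k))"
  using sum_le_suminf[OF summable_ge1_tail[OF assms], of "{0}"] ge1_pos assms
  by (simp add: less_imp_le)

lemma ge1_tail_le:
  assumes "1 \<le> n"
  shows "(\<Sum>t. ge1 (t + k) / real n ^ (t + k)) \<le> (24 * cosh alpha / 23 - S1_defect k) / 24^k / real n ^ k"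
proof -
  define f where "f t = ge1 (t + k) / real n ^ (t + k)" for t
  define Q where "Q = 24^k * real n ^ k"
  have summable: "summable f" unfolding f_def by (rule summable_ge1_tail[OF assms])
  have "(\<lambda>t. f (Suc t)) sums (suminf f - f 0)"
    using summable by (subst sums_Suc_iff) (simp add: summable_sums)
  moreover have "(\<lambda>t. cosh alpha / Q / 24 * (1/24)^t) sums (cosh alpha / Q / 24 * (1 / (1 - 1/24)))"
    by (intro sums_mult geometric_sums) simp
  moreover have "f (Suc t) \<le> cosh alpha / Q / 24 * (1/24)^t" for t
    using ge1_tail_term_le[OF assms, of "Suc t" k] unfolding f_def Q_def by simp
  ultimately have "suminf f - f 0 \<le> cosh alpha / Q / 24 * (1 / (1 - 1/24))"
    by (rule sums_le[rotated])
  moreover have "f 0 = (cosh alpha - S1_defect k) / Q"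
    unfolding f_def Q_def ge1_eq_S1_defect by simp
  moreover have "(cosh alpha - S1_defect k) / Q + cosh alpha / Q / 24 * (1 / (1 - 1/24))
      = (24 * cosh alpha / 23 - S1_defect k) / Q"
    by (simp add: field_split_simps)
  ultimately have "suminf f \<le> (24 * cosh alpha / 23 - S1_defect k) / Q"
    by linarith
  then show ?thesis unfolding f_def Q_def by (simp only: divide_divide_eq_left)
qed

lemma powr_three_halves: "0 \<le> x \<Longrightarrow> x powr (3/2) = x * sqrt (x::real)"
  using powr_add[of x 1 "1/2"] by (simp add: powr_half_sqrt)

lemma L1_lt_ge1: "L1 k < ge1 k"
proof -
  define r where "r = sqrt (real k + 1)"
  define c where "c = central_binom_prob k"
  have r: "0 < r" unfolding r_def by simp
  have c: "0 < c" unfolding c_def by (rule central_binom_prob_pos)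
  have "(5 * r)^2 \<le> (6 * sqrt (2 * real k + 1))^2"
    unfolding r_def by (simp add: power_mult_distrib)
  then have "5 * r \<le> 6 * sqrt (2 * real k + 1)"
    by (rule power2_le_imp_le) simp
  then have "c * (5 * r) \<le> c * (6 * sqrt (2 * real k + 1))"
    using c by (intro mult_left_mono) auto
  also have "\<dots> \<le> 6"
    using central_binom_prob_mult_sqrt_le[of k] unfolding c_def by simp
  finally have "c \<le> 6 / (5 * r)"
    using r by (simp add: le_divide_eq)
  then have "S1_defect k \<le> 6 / (5 * r) * (alpha * sinh alpha)"
    using S1_defect_le[of k] alpha_pos unfolding c_def[symmetric]
    by (meson mult_right_mono order_trans sinh_real_nonneg_iff mult_nonneg_nonneg less_imp_le)
  then have "S1_defect k \<le> 6 * alpha * sinh alpha / (5 * r)" by simp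
  moreover have "0 < 3 / (10 * ((real k + 1) * r))" using r by simp
  ultimately have "cosh alpha - 6 * alpha * sinh alpha / (5 * r) - 3 / (10 * ((real k + 1) * r))
      < cosh alpha - S1_defect k"
    by linarith
  moreover have "(real k + 1) powr (3/2) = (real k + 1) * r"
    unfolding r_def by (rule powr_three_halves) simp
  ultimately show ?thesis
    unfolding L1_def ge1_eq_S1_defect r_def[symmetric] by (simp add: divide_strict_right_mono)
qed

lemma S1_defect_error_term_lt:
  assumes "1 \<le> k"
  shows "central_binom_prob k / real k * (alpha^2 / (1 - alpha^2))
           < 5 / (4 * ((real k + 1) * sqrt (real k + 1)))"
proof -
  define r where "r = sqrt (real k + 1)"
  define c where "c = central_binom_prob k"
  have r: "0 < r" unfolding r_def by simp
  have c: "0 < c" unfolding c_def by (rule central_binom_prob_pos)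
  have k: "0 < real k" using assms by simp
  have cr: "c * r \<le> 1"
    using central_binom_prob_mult_sqrt_Suc_le[of k] unfolding c_def r_def .
  have kr: "4 * (real k + 1) * r \<le> 10 * real k * r"
    using r assms by (intro mult_right_mono) auto
  have "alpha^2 / (1 - alpha^2) < 1/2"
    using alpha_sq_lt_third by (simp add: divide_less_eq)
  then have "c / real k * (alpha^2 / (1 - alpha^2)) < c / real k * (1/2)"
    using c k by (intro mult_strict_left_mono) auto
  also have "\<dots> \<le> 1 / (2 * real k * r)"
    using cr r k by (simp add: field_simps)
  also have "\<dots> \<le> 5 / (4 * ((real k + 1) * r))"
    using kr r k by (simp add: divide_simps mult.assoc)
  finally show ?thesis unfolding c_def r_def .
qed

lemma ge1_tail_bound_lt_U1:
  assumes "1 \<le> k"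
  shows "(24 * cosh alpha / 23 - S1_defect k) / 24^k < U1 k"
proof -
  define r where "r = sqrt (real k + 1)"
  define c where "c = central_binom_prob k"
  define A where "A = alpha * sinh alpha"
  have r: "0 < r" unfolding r_def by simp
  have c: "0 < c" unfolding c_def by (rule central_binom_prob_pos)
  have A: "0 \<le> A" unfolding A_def using alpha_pos by simp
  have "sqrt (4 * real k + 1) \<le> 2 * r"
    unfolding r_def by (rule real_le_lsqrt) (auto simp: power_mult_distrib)
  then have "c * sqrt (4 * real k + 1) \<le> c * (2 * r)"
    using c by (intro mult_left_mono) auto
  then have "1 / (2 * r) \<le> c"
    using central_binom_prob_mult_sqrt_ge[of k] r unfolding c_def[symmetric]
    by (simp add: divide_le_eq mult.commute)
  then have "1 / (2 * r) * A \<le> c * A"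
    using A by (rule mult_right_mono)
  then have "A / (2 * r) \<le> c * A" by simp
  moreover have "c / real k * (alpha^2 / (1 - alpha^2)) < 5 / (4 * ((real k + 1) * r))"
    using S1_defect_error_term_lt[OF assms] unfolding c_def r_def .
  ultimately have "A / (2 * r) - 5 / (4 * ((real k + 1) * r)) < S1_defect k"
    using S1_defect_ge[OF assms] unfolding c_def A_def by linarith
  moreover have "(real k + 1) powr (3/2) = (real k + 1) * r"
    unfolding r_def by (rule powr_three_halves) simp
  ultimately show ?thesis
    unfolding U1_def r_def[symmetric] A_def by (simp add: divide_strict_right_mono)
qed

theorem mainTheorem16:
  fixes n k :: nat
  assumes "n \<ge> 1" and "k \<ge> 1"
  shows "summable (\<lambda>t. ge1 (t + k) / real n ^ (t + k)) \<and>
         L1 k / real n ^ k < (\<Sum>t. ge1 (t + k) / real n ^ (t + k)) \<and>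
         (\<Sum>t. ge1 (t + k) / real n ^ (t + k)) < U1 k / real n ^ k"
proof (intro conjI)
  show "summable (\<lambda>t. ge1 (t + k) / real n ^ (t + k))"
    using summable_ge1_tail[OF assms(1)] .
  have "L1 k / real n ^ k < ge1 k / real n ^ k"
    using L1_lt_ge1 assms(1) by (intro divide_strict_right_mono) auto
  then show "L1 k / real n ^ k < (\<Sum>t. ge1 (t + k) / real n ^ (t + k))"
    using ge1_tail_ge[OF assms(1), of k] by linarith
  have "(24 * cosh alpha / 23 - S1_defect k) / 24^k / real n ^ k < U1 k / real n ^ k"
    using ge1_tail_bound_lt_U1[OF assms(2)] assms(1) by (intro divide_strict_right_mono) auto
  then show "(\<Sum>t. ge1 (t + k) / real n ^ (t + k)) < U1 k / real n ^ k"
    using ge1_tail_le[OF assms(1), of k] by linarith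
qed

end
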